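(* Up to multiplication by a positive integer, every basic weight of a basic system of type $G_2$ is one of the following (coordinates $\lambda_k=\langle\lambda,e_k\rangle$): (1) $(G_2,1,1)$: $(-1,1,0)$, $(-1,0,1)$; (2) $(G_2,1,2)$: $(-1,2,-1)$, $(-1,-1,2)$, $(-2,1,1)$; (3) $(G_2,2,1)$: $(1,0,-1)$, $(1,-1,0)$, $(0,-1,1)$; (4) $(G_2,2,2)$: $(1,-2,1)$, $(2,-1,-1)$.
   Context: $G_2$ is realized in the plane $\{x_1+x_2+x_3=0\}$ of $\mathbb R^3$ with orthonormal basis $e_1,e_2,e_3$ and standard inner product, simple roots $\alpha_1=e_1-e_2$, $\alpha_2=-2e_1+e_2+e_3$. Let $W$ be the Weyl group, $\alpha^\vee=2\alpha/\langle\alpha,\alpha\rangle$. A weight is integral if $\langle\lambda,\alpha^\vee\rangle\in\mathbb Z$ for all roots $\alpha$; $\overline\lambda$ is the dominant weight in $W\lambda$. For $I=\Delta\setminus\{\alpha_i\}$, $J=\Delta\setminus\{\alpha_j\}$, a basic weight of $(\Phi,i,j)$ is an integral $\lambda$ with $\langle\lambda,\alpha^\vee\rangle\in\mathbb Z_{>0}$ for all $\alpha\in I$ and $\{\alpha\in\Delta:\langle\overline\lambda,\alpha\rangle=0\}=J$; $(\Phi,i,j)$ is a basic system if it has a basic weight. *)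

theory Defs
  imports "HOL-Analysis.Analysis"
begin

text \<open>G2 realised in the plane x1+x2+x3=0 of R^3 (vectors of type real^3).\<close>

definition ev :: "nat \<Rightarrow> real^3" where
  "ev k = axis (of_nat k) 1"

definition vec3 :: "real \<Rightarrow> real \<Rightarrow> real \<Rightarrow> real^3" where
  "vec3 a b c = (\<chi> k. if k = 1 then a else if k = 2 then b else c)"

definition in_plane :: "real^3 \<Rightarrow> bool" where
  "in_plane v \<longleftrightarrow> v $ 1 + v $ 2 + v $ 3 = 0"

definition G2_roots :: "(real^3) set" where
  "G2_roots = {ev a - ev b | a b. a \<in> {1,2,3} \<and> b \<in> {1,2,3} \<and> a \<noteq> b}
      \<union> {s *\<^sub>R (2 *\<^sub>R ev a - ev b - ev c) | s a b c. s \<in> {1, -1} \<and>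
            {a, b, c} = {1,2,3::nat}}"

definition G2_simple :: "nat \<Rightarrow> real^3" where
  "G2_simple k = (if k = 1 then ev 1 - ev 2 else - 2 *\<^sub>R ev 1 + ev 2 + ev 3)"

definition G2_Delta :: "(real^3) set" where
  "G2_Delta = {G2_simple 1, G2_simple 2}"

definition coroot :: "real^3 \<Rightarrow> real^3" where
  "coroot \<alpha> = (2 / (\<alpha> \<bullet> \<alpha>)) *\<^sub>R \<alpha>"

definition refl :: "real^3 \<Rightarrow> real^3 \<Rightarrow> real^3" where
  "refl \<alpha> v = v - (v \<bullet> coroot \<alpha>) *\<^sub>R \<alpha>"

inductive_set G2_Weyl :: "(real^3 \<Rightarrow> real^3) set" where
  id: "id \<in> G2_Weyl"
| step: "w \<in> G2_Weyl \<Longrightarrow> \<alpha> \<in> G2_roots \<Longrightarrow> refl \<alpha> \<circ> w \<in> G2_Weyl"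

definition integral_weight :: "real^3 \<Rightarrow> bool" where
  "integral_weight lam \<longleftrightarrow> (\<forall>\<alpha>\<in>G2_roots. lam \<bullet> coroot \<alpha> \<in> \<int>)"

definition dominant :: "real^3 \<Rightarrow> bool" where
  "dominant \<mu> \<longleftrightarrow> (\<forall>\<alpha>\<in>G2_Delta. \<mu> \<bullet> \<alpha> \<ge> 0)"

definition dom_rep :: "real^3 \<Rightarrow> real^3" where
  "dom_rep lam = (THE \<mu>. \<mu> \<in> (%w. w lam) ` G2_Weyl \<and> dominant \<mu>)"

text \<open>Basic weight of (G2, i, j), with I = Delta - {alpha_i}, J = Delta - {alpha_j}.\<close>
definition basic_weight_G2 :: "nat \<Rightarrow> nat \<Rightarrow> real^3 \<Rightarrow> bool" where
  "basic_weight_G2 i j lam \<longleftrightarrow>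
     in_plane lam \<and> integral_weight lam \<and>
     (\<forall>\<alpha>\<in>G2_Delta - {G2_simple i}. lam \<bullet> coroot \<alpha> \<in> \<int> \<and> lam \<bullet> coroot \<alpha> > 0) \<and>
     {\<alpha>\<in>G2_Delta. dom_rep lam \<bullet> \<alpha> = 0} = G2_Delta - {G2_simple j}"

definition G2_basic_list :: "nat \<Rightarrow> nat \<Rightarrow> (real^3) set" where
  "G2_basic_list i j =
    (if i = 1 \<and> j = 1 then {vec3 (-1) 1 0, vec3 (-1) 0 1}
     else if i = 1 \<and> j = 2 then {vec3 (-1) 2 (-1), vec3 (-1) (-1) 2, vec3 (-2) 1 1}
     else if i = 2 \<and> j = 1 then {vec3 1 0 (-1), vec3 1 (-1) 0, vec3 0 (-1) 1}
     else {vec3 1 (-2) 1, vec3 2 (-1) (-1)})"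

end

(* On the plane x1 + x2 + x3 = 0 the reflections in the twelve roots act as the coordinate
   transpositions and their negatives, so the Weyl orbit of a weight is the set of its signed
   coordinate permutations, which contains exactly one dominant weight.  A dominant weight whose
   stabiliser among the simple roots is Delta - {alpha_j} is a positive multiple t of the
   fundamental weight omega_j; hence lambda = t u with u a signed permutation of omega_j, t is an
   integer because lambda is integral, and positivity of lambda on the coroots of
   Delta - {alpha_i} singles out the listed vectors u. *)

theory Submission
  imports Defs
begin

lemma vec3_nth [simp]: "vec3 a b c $ 1 = a" "vec3 a b c $ 2 = b" "vec3 a b c $ 3 = c"
  by (simp_all add: vec3_def)

lemma vec3_eq_iff [simp]: "vec3 a b c = vec3 a' b' c' \<longleftrightarrow> a = a' \<and> b = b' \<and> c = c'"
  by (auto simp: vec_eq_iff forall_3)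

lemma vec3_cases: obtains a b c where "v = vec3 a b c"
proof
  show "v = vec3 (v $ 1) (v $ 2) (v $ 3)"
    by (simp add: vec_eq_iff forall_3)
qed

lemma vec3_arith [simp]:
  "vec3 a b c + vec3 a' b' c' = vec3 (a + a') (b + b') (c + c')"
  "vec3 a b c - vec3 a' b' c' = vec3 (a - a') (b - b') (c - c')"
  "- vec3 a b c = vec3 (- a) (- b) (- c)"
  "s *\<^sub>R vec3 a b c = vec3 (s * a) (s * b) (s * c)"
  "vec3 a b c \<bullet> vec3 a' b' c' = a * a' + b * b' + c * c'"
  by (simp_all add: vec_eq_iff forall_3 inner_vec_def sum_3)

lemma in_plane_vec3 [simp]: "in_plane (vec3 a b c) \<longleftrightarrow> a + b + c = 0"
  by (simp add: in_plane_def)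

lemma ev_eq_vec3 [simp]:
  "ev 1 = vec3 1 0 0" "ev (Suc 0) = vec3 1 0 0" "ev 2 = vec3 0 1 0" "ev 3 = vec3 0 0 1"
  by (simp_all add: ev_def vec_eq_iff forall_3 axis_def)

lemma G2_simple_eq [simp]:
  "G2_simple 1 = vec3 1 (-1) 0" "G2_simple (Suc 0) = vec3 1 (-1) 0" "G2_simple 2 = vec3 (-2) 1 1"
  by (simp_all add: G2_simple_def)

lemma perm_of_insert3_eq_123:
  assumes "{a, b, c} = {1, 2, 3 :: nat}"
  shows "(a, b, c) \<in> {(1,2,3), (1,3,2), (2,1,3), (2,3,1), (3,1,2), (3,2,1)}"
proof -
  have "{a, b, c} \<subseteq> {1, 2, 3}" and covers: "{1, 2, 3} \<subseteq> {a, b, c}"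
    using assms by simp_all
  then have "a \<in> {1, 2, 3}" "b \<in> {1, 2, 3}" "c \<in> {1, 2, 3}"
    by simp_all
  then show ?thesis
    by (elim insertE emptyE) (use covers in simp_all)
qed

lemma G2_roots_eq:
  "G2_roots = {vec3 1 (-1) 0, vec3 (-1) 1 0, vec3 1 0 (-1), vec3 (-1) 0 1, vec3 0 1 (-1),
    vec3 0 (-1) 1, vec3 2 (-1) (-1), vec3 (-2) 1 1, vec3 (-1) 2 (-1), vec3 1 (-2) 1,
    vec3 (-1) (-1) 2, vec3 1 1 (-2)}" (is "_ = ?R")
proof
  have short: "ev a - ev b \<in> G2_roots" if "a \<in> {1,2,3}" "b \<in> {1,2,3}" "a \<noteq> b" for a b
    using that unfolding G2_roots_def by blast
  have long: "s *\<^sub>R (2 *\<^sub>R ev a - ev b - ev c) \<in> G2_roots"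
    if "s \<in> {1,-1}" "{a,b,c} = {1,2,3::nat}" for s a b c
    using that unfolding G2_roots_def by blast
  have "{2,1,3} = {1,2,3::nat}" "{3,1,2} = {1,2,3::nat}" by auto
  then show "?R \<subseteq> G2_roots"
    using short[of 1 2] short[of 2 1] short[of 1 3] short[of 3 1] short[of 2 3] short[of 3 2]
      long[of 1 1 2 3] long[of "-1" 1 2 3] long[of 1 2 1 3] long[of "-1" 2 1 3]
      long[of 1 3 1 2] long[of "-1" 3 1 2]
    by simp
  show "G2_roots \<subseteq> ?R"
  proof
    fix \<alpha> assume "\<alpha> \<in> G2_roots"
    then consider (short) a b where "\<alpha> = ev a - ev b" "a \<in> {1,2,3}" "b \<in> {1,2,3}" "a \<noteq> b"
      | (long) s a b c where "\<alpha> = s *\<^sub>R (2 *\<^sub>R ev a - ev b - ev c)" "s \<in> {1,-1}"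
          "{a,b,c} = {1,2,3::nat}"
      unfolding G2_roots_def by blast
    then show "\<alpha> \<in> ?R"
    proof cases
      case short
      have "\<forall>a\<in>{1,2,3}. \<forall>b\<in>{1,2,3}. a \<noteq> b \<longrightarrow> ev a - ev b \<in> ?R"
        by simp
      with short show ?thesis by blast
    next
      case long
      have "\<forall>s\<in>{1,-1}. \<forall>(a,b,c)\<in>{(1,2,3),(1,3,2),(2,1,3),(2,3,1),(3,1,2),(3,2,1)}.
          s *\<^sub>R (2 *\<^sub>R ev a - ev b - ev c) \<in> ?R"
        by simp
      from bspec[OF bspec[OF this long(2)] perm_of_insert3_eq_123[OF long(3)]] long(1)
      show ?thesis by simp
    qed
  qed
qed

definition signed_perms :: "real^3 \<Rightarrow> (real^3) set" where
  "signed_perms v =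
     {s *\<^sub>R vec3 (v $ i) (v $ j) (v $ k) | s i j k. s \<in> {1, -1} \<and> distinct [i, j, k]}"

lemma signed_perms_vec3:
  "signed_perms (vec3 a b c) =
     {vec3 a b c, vec3 a c b, vec3 b a c, vec3 b c a, vec3 c a b, vec3 c b a,
      vec3 (-a) (-b) (-c), vec3 (-a) (-c) (-b), vec3 (-b) (-a) (-c), vec3 (-b) (-c) (-a),
      vec3 (-c) (-a) (-b), vec3 (-c) (-b) (-a)}" (is "_ = ?P")
proof
  let ?v = "vec3 a b c"
  have "\<forall>s\<in>{1,-1}. \<forall>i j k :: 3. distinct [i, j, k] \<longrightarrow>
      s *\<^sub>R vec3 (?v $ i) (?v $ j) (?v $ k) \<in> ?P"
    by (simp add: forall_3)
  then show "signed_perms ?v \<subseteq> ?P"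
    unfolding signed_perms_def by blast
  have mem: "s *\<^sub>R vec3 (?v $ i) (?v $ j) (?v $ k) \<in> signed_perms ?v"
    if "s \<in> {1, -1}" "distinct [i, j, k]" for s i j k
    using that unfolding signed_perms_def by blast
  show "?P \<subseteq> signed_perms ?v"
    using mem[of 1 1 2 3] mem[of 1 1 3 2] mem[of 1 2 1 3] mem[of 1 2 3 1] mem[of 1 3 1 2]
      mem[of 1 3 2 1] mem[of "-1" 1 2 3] mem[of "-1" 1 3 2] mem[of "-1" 2 1 3]
      mem[of "-1" 2 3 1] mem[of "-1" 3 1 2] mem[of "-1" 3 2 1]
    by simp
qed

lemma self_in_signed_perms: "v \<in> signed_perms v"
  by (cases v rule: vec3_cases) (simp add: signed_perms_vec3)

lemma signed_perms_in_plane: "in_plane v \<Longrightarrow> u \<in> signed_perms v \<Longrightarrow> in_plane u"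
  by (cases v rule: vec3_cases) (auto simp: signed_perms_vec3)

lemma signed_perms_trans: "u \<in> signed_perms v \<Longrightarrow> signed_perms u \<subseteq> signed_perms v"
  by (cases v rule: vec3_cases) (auto simp: signed_perms_vec3)

lemma signed_perms_sym: "u \<in> signed_perms v \<Longrightarrow> v \<in> signed_perms u"
  by (cases v rule: vec3_cases) (auto simp: signed_perms_vec3)

lemma signed_perms_scaleR: "signed_perms (t *\<^sub>R v) = (\<lambda>u. t *\<^sub>R u) ` signed_perms v"
  by (cases v rule: vec3_cases) (simp add: signed_perms_vec3 mult.commute)

lemma signed_perms_Ints:
  assumes "\<forall>k. v $ k \<in> \<int>" "u \<in> signed_perms v"
  shows "\<forall>k. u $ k \<in> \<int>"
  using assms by (cases v rule: vec3_cases) (auto simp: signed_perms_vec3 forall_3)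

lemma inner_coroot: "v \<bullet> coroot \<alpha> = 2 * (v \<bullet> \<alpha>) / (\<alpha> \<bullet> \<alpha>)"
  by (simp add: coroot_def)

lemma refl_root_vec3:
  assumes "x + y + z = 0"
  shows "refl (vec3 1 (-1) 0) (vec3 x y z) = vec3 y x z"
    "refl (vec3 (-1) 1 0) (vec3 x y z) = vec3 y x z"
    "refl (vec3 1 0 (-1)) (vec3 x y z) = vec3 z y x"
    "refl (vec3 (-1) 0 1) (vec3 x y z) = vec3 z y x"
    "refl (vec3 0 1 (-1)) (vec3 x y z) = vec3 x z y"
    "refl (vec3 0 (-1) 1) (vec3 x y z) = vec3 x z y"
    "refl (vec3 2 (-1) (-1)) (vec3 x y z) = vec3 (-x) (-z) (-y)"
    "refl (vec3 (-2) 1 1) (vec3 x y z) = vec3 (-x) (-z) (-y)"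
    "refl (vec3 (-1) 2 (-1)) (vec3 x y z) = vec3 (-z) (-y) (-x)"
    "refl (vec3 1 (-2) 1) (vec3 x y z) = vec3 (-z) (-y) (-x)"
    "refl (vec3 (-1) (-1) 2) (vec3 x y z) = vec3 (-y) (-x) (-z)"
    "refl (vec3 1 1 (-2)) (vec3 x y z) = vec3 (-y) (-x) (-z)"
  using assms unfolding refl_def inner_coroot by (simp_all add: field_simps; linarith)+

lemma refl_root_signed_perms:
  assumes "\<alpha> \<in> G2_roots" "in_plane u"
  shows "refl \<alpha> u \<in> signed_perms u"
proof -
  obtain x y z where u: "u = vec3 x y z" by (rule vec3_cases)
  with assms(2) have "x + y + z = 0" by simp
  with assms(1) show ?thesis
    unfolding u G2_roots_eq
    by (elim insertE emptyE) (simp_all add: refl_root_vec3 signed_perms_vec3)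
qed

lemma G2_Weyl_in_signed_perms:
  assumes "in_plane v" "w \<in> G2_Weyl"
  shows "w v \<in> signed_perms v"
  using assms(2)
proof induction
  case id
  show ?case by (simp add: self_in_signed_perms)
next
  case (step w \<alpha>)
  have "in_plane (w v)"
    using signed_perms_in_plane[OF assms(1) step.IH] .
  then have "refl \<alpha> (w v) \<in> signed_perms (w v)"
    using refl_root_signed_perms[OF step.hyps(2)] by blast
  then show ?case
    using signed_perms_trans[OF step.IH] by auto
qed

lemma refl_in_G2_Weyl_orbit:
  assumes "u \<in> (\<lambda>w. w v) ` G2_Weyl" "\<alpha> \<in> G2_roots"
  shows "refl \<alpha> u \<in> (\<lambda>w. w v) ` G2_Weyl"
proof -
  from assms(1) obtain w where "w \<in> G2_Weyl" "u = w v" by blast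
  with G2_Weyl.step[OF _ assms(2)] show ?thesis
    by (intro image_eqI[of _ _ "refl \<alpha> \<circ> w"]) auto
qed

lemma signed_perms_subset_G2_Weyl_orbit:
  assumes "in_plane v"
  shows "signed_perms v \<subseteq> (\<lambda>w. w v) ` G2_Weyl" (is "_ \<subseteq> ?O")
proof -
  have roots: "vec3 1 (-1) 0 \<in> G2_roots" "vec3 0 1 (-1) \<in> G2_roots" "vec3 2 (-1) (-1) \<in> G2_roots"
    by (simp_all add: G2_roots_eq)
  have moves: "vec3 y x z \<in> ?O \<and> vec3 x z y \<in> ?O \<and> vec3 (-x) (-y) (-z) \<in> ?O"
    if "vec3 x y z \<in> ?O" "x + y + z = 0" for x y z
  proof -
    have "vec3 y x z \<in> ?O"
      using refl_in_G2_Weyl_orbit[OF that(1) roots(1)] refl_root_vec3(1)[OF that(2)] by simp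
    moreover have swap23: "vec3 x z y \<in> ?O"
      using refl_in_G2_Weyl_orbit[OF that(1) roots(2)] refl_root_vec3(5)[OF that(2)] by simp
    moreover have "x + z + y = 0" using that(2) by simp
    then have "vec3 (-x) (-y) (-z) \<in> ?O"
      using refl_in_G2_Weyl_orbit[OF swap23 roots(3)] refl_root_vec3(7) by simp
    ultimately show ?thesis by blast
  qed
  obtain a b c where v: "v = vec3 a b c" by (rule vec3_cases)
  with assms have plane: "a + b + c = 0" by simp
  have sums: "b + a + c = 0" "a + c + b = 0" "b + c + a = 0" "c + a + b = 0" "c + b + a = 0"
    using plane by linarith+
  have abc: "vec3 a b c \<in> ?O"
    unfolding v using G2_Weyl.id by (intro image_eqI[of _ _ id]) auto
  then have bac: "vec3 b a c \<in> ?O" and acb: "vec3 a c b \<in> ?O"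
    using moves plane by blast+
  then have bca: "vec3 b c a \<in> ?O" and cab: "vec3 c a b \<in> ?O"
    using moves sums by blast+
  then have cba: "vec3 c b a \<in> ?O"
    using moves sums by blast
  show ?thesis
    using abc bac acb bca cab cba moves[OF abc plane] moves[OF bac sums(1)]
      moves[OF acb sums(2)] moves[OF bca sums(3)] moves[OF cab sums(4)] moves[OF cba sums(5)]
    by (simp add: v signed_perms_vec3)
qed

lemma G2_Weyl_orbit: "in_plane v \<Longrightarrow> (\<lambda>w. w v) ` G2_Weyl = signed_perms v"
  using G2_Weyl_in_signed_perms signed_perms_subset_G2_Weyl_orbit by blast

lemma dominant_vec3: "dominant (vec3 x y z) \<longleftrightarrow> y \<le> x \<and> 2 * x \<le> y + z"
  by (auto simp: dominant_def G2_Delta_def)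

lemma ex1_dominant_signed_perm:
  assumes "in_plane v"
  shows "\<exists>!\<mu>. \<mu> \<in> signed_perms v \<and> dominant \<mu>"
proof -
  obtain a b c where v: "v = vec3 a b c" by (rule vec3_cases)
  with assms have plane: "a + b + c = 0" by simp
  \<comment> \<open>with x + y + z = 0, dominance of (x, y, z) means y \<le> x \<le> 0 \<le> z\<close>
  have "\<exists>\<mu>\<in>signed_perms v. dominant \<mu>"
    using plane unfolding v by (simp add: signed_perms_vec3 dominant_vec3) smt
  moreover have "\<mu> = \<mu>'"
    if "\<mu> \<in> signed_perms v" "\<mu>' \<in> signed_perms v" "dominant \<mu>" "dominant \<mu>'" for \<mu> \<mu>'
    using that plane unfolding v signed_perms_vec3
    by (elim insertE emptyE; hypsubst; simp only: dominant_vec3 vec3_eq_iff; linarith)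
  ultimately show ?thesis by blast
qed

lemma dom_rep_signed_perms:
  assumes "in_plane v"
  shows "dom_rep v \<in> signed_perms v" "dominant (dom_rep v)"
  using theI'[OF ex1_dominant_signed_perm[OF assms]]
  unfolding dom_rep_def G2_Weyl_orbit[OF assms] by simp_all

\<comment> \<open>omega_1 = 2 alpha_1 + alpha_2 and omega_2 = 3 alpha_1 + 2 alpha_2, dual to the simple coroots\<close>
definition G2_fund_weight :: "nat \<Rightarrow> real^3" where
  "G2_fund_weight j = (if j = 1 then vec3 0 (-1) 1 else vec3 (-1) (-1) 2)"

lemma dominant_stabilizer_fund_weight:
  assumes "in_plane \<mu>" "dominant \<mu>" "j \<in> {1, 2}"
    and "{\<alpha>\<in>G2_Delta. \<mu> \<bullet> \<alpha> = 0} = G2_Delta - {G2_simple j}"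
  shows "\<exists>t>0. \<mu> = t *\<^sub>R G2_fund_weight j"
proof -
  obtain x y z where \<mu>: "\<mu> = vec3 x y z" by (rule vec3_cases)
  have plane: "x + y + z = 0" and dom: "y \<le> x" "2 * x \<le> y + z"
    using assms(1,2) by (simp_all add: \<mu> dominant_vec3)
  have stab: "\<mu> \<bullet> \<alpha> = 0 \<longleftrightarrow> \<alpha> \<noteq> G2_simple j" if "\<alpha> \<in> G2_Delta" for \<alpha>
    using assms(4) that by blast
  have "G2_simple 1 \<in> G2_Delta" "G2_simple 2 \<in> G2_Delta"
    by (simp_all only: G2_Delta_def insertI1 insertI2)
  moreover have "\<mu> \<bullet> G2_simple 1 = x - y" "\<mu> \<bullet> G2_simple 2 = y + z - 2 * x"
    by (simp_all add: \<mu> algebra_simps)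
  ultimately have "x - y = 0 \<longleftrightarrow> G2_simple 1 \<noteq> G2_simple j"
    "y + z - 2 * x = 0 \<longleftrightarrow> G2_simple 2 \<noteq> G2_simple j"
    using stab by metis+
  with assms(3) consider "j = 1" "x - y \<noteq> 0" "y + z - 2 * x = 0"
    | "j = 2" "x - y = 0" "y + z - 2 * x \<noteq> 0"
    by fastforce
  then have "- y > 0 \<and> \<mu> = (- y) *\<^sub>R G2_fund_weight j"
  proof cases
    case 1
    with plane dom have "x = 0" "z = - y" "y < 0" by linarith+
    with 1 show ?thesis by (simp add: \<mu> G2_fund_weight_def)
  next
    case 2
    with plane dom have "x = y" "z = - 2 * y" "y < 0" by linarith+
    with 2 show ?thesis by (simp add: \<mu> G2_fund_weight_def)
  qed
  then show ?thesis by blast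
qed

lemma integral_weight_Ints:
  assumes "in_plane v" "integral_weight v"
  shows "\<forall>k. v $ k \<in> \<int>"
proof -
  obtain a b c where v: "v = vec3 a b c" by (rule vec3_cases)
  have plane: "a + b + c = 0" using assms(1) by (simp add: v)
  have "v \<bullet> coroot \<alpha> \<in> \<int>" if "\<alpha> \<in> G2_roots" for \<alpha>
    using assms(2) that unfolding integral_weight_def by blast
  then have "v \<bullet> coroot (vec3 2 (-1) (-1)) \<in> \<int>" "v \<bullet> coroot (vec3 (-1) 2 (-1)) \<in> \<int>"
    "v \<bullet> coroot (vec3 (-1) (-1) 2) \<in> \<int>"
    by (simp_all add: G2_roots_eq)
  moreover have "v \<bullet> coroot (vec3 2 (-1) (-1)) = a" "v \<bullet> coroot (vec3 (-1) 2 (-1)) = b"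
    "v \<bullet> coroot (vec3 (-1) (-1) 2) = c"
    using plane by (simp_all add: v inner_coroot field_simps; linarith)+
  ultimately show ?thesis by (simp add: forall_3 v)
qed

lemma inner_coroot_G2_simple:
  assumes "in_plane v"
  shows "v \<bullet> coroot (G2_simple 1) = v $ 1 - v $ 2" "v \<bullet> coroot (G2_simple 2) = - v $ 1"
proof -
  obtain a b c where v: "v = vec3 a b c" by (rule vec3_cases)
  with assms show "v \<bullet> coroot (G2_simple 1) = v $ 1 - v $ 2" "v \<bullet> coroot (G2_simple 2) = - v $ 1"
    by (simp_all add: inner_coroot field_simps; linarith)+
qed

lemma signed_perms_fund_weight_G2_basic_list:
  assumes "i \<in> {1, 2}" "j \<in> {1, 2}" "u \<in> signed_perms (G2_fund_weight j)"
    and "\<forall>\<alpha>\<in>G2_Delta - {G2_simple i}. 0 < u \<bullet> coroot \<alpha>"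
  shows "u \<in> G2_basic_list i j"
proof -
  have "in_plane (G2_fund_weight j)" by (simp add: G2_fund_weight_def)
  then have "in_plane u" using assms(3) by (rule signed_perms_in_plane)
  have "G2_simple (3 - i) \<in> G2_Delta - {G2_simple i}"
    using assms(1) by (auto simp: G2_Delta_def)
  with assms(4) have "0 < u \<bullet> coroot (G2_simple (3 - i))" by blast
  then have cond: "if i = 1 then u $ 1 < 0 else u $ 2 < u $ 1"
    using assms(1) inner_coroot_G2_simple[OF \<open>in_plane u\<close>] by (auto simp del: G2_simple_eq)
  show ?thesis
  proof (cases "j = 1")
    case True
    with assms(3) have "u \<in> signed_perms (vec3 0 (-1) 1)" by (simp add: G2_fund_weight_def)
    with assms(1) cond True show ?thesis
      unfolding signed_perms_vec3 G2_basic_list_def by (elim insertE emptyE) simp_all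
  next
    case False
    with assms(2,3) have "j = 2" "u \<in> signed_perms (vec3 (-1) (-1) 2)"
      by (simp_all add: G2_fund_weight_def)
    with assms(1) cond show ?thesis
      unfolding signed_perms_vec3 G2_basic_list_def by (elim insertE emptyE) simp_all
  qed
qed

theorem theorem5p13:
  fixes i j :: nat and lam :: "real^3"
  assumes "i \<in> {1, 2}" and "j \<in> {1, 2}" and "basic_weight_G2 i j lam"
  shows "\<exists>n::nat. n > 0 \<and> (\<exists>v\<in>G2_basic_list i j. lam = real n *\<^sub>R v)"
proof -
  have plane: "in_plane lam" and integral: "integral_weight lam"
    and pos: "\<forall>\<alpha>\<in>G2_Delta - {G2_simple i}. 0 < lam \<bullet> coroot \<alpha>"
    and stab: "{\<alpha>\<in>G2_Delta. dom_rep lam \<bullet> \<alpha> = 0} = G2_Delta - {G2_simple j}"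
    using assms(3) unfolding basic_weight_G2_def by auto
  note dom = dom_rep_signed_perms[OF plane]
  obtain t where "t > 0" and t: "dom_rep lam = t *\<^sub>R G2_fund_weight j"
    using dominant_stabilizer_fund_weight[OF signed_perms_in_plane[OF plane dom(1)] dom(2)
        assms(2) stab] by blast
  \<comment> \<open>both fundamental weights have second coordinate -1\<close>
  have "dom_rep lam $ 2 = - t"
    by (simp add: t G2_fund_weight_def)
  with signed_perms_Ints[OF integral_weight_Ints[OF plane integral] dom(1)]
  have "t \<in> \<int>" by (metis minus_in_Ints_iff)
  with \<open>t > 0\<close> have "t \<in> \<nat>" by (simp add: Nats_altdef2)
  then obtain n :: nat where "t = real n" by (rule Nats_cases)
  with \<open>t > 0\<close> have "n > 0" by simp
  obtain u where u: "u \<in> signed_perms (G2_fund_weight j)" "lam = t *\<^sub>R u"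
    using signed_perms_sym[OF dom(1)] by (auto simp: t signed_perms_scaleR)
  have "\<forall>\<alpha>\<in>G2_Delta - {G2_simple i}. 0 < u \<bullet> coroot \<alpha>"
    using pos \<open>t > 0\<close> by (simp add: u(2) zero_less_mult_iff)
  with assms(1,2) u have "u \<in> G2_basic_list i j"
    by (intro signed_perms_fund_weight_G2_basic_list)
  then show ?thesis
    using \<open>n > 0\<close> \<open>t = real n\<close> u(2) by blast
qed

end
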